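(* Let $G\in L^\infty_{q\times p}$ be such that its Hankel operator $H$ satisfies (C1) $H$ has finite rank, and (C2) no maximizing vector of $H$ belongs to $SH^2_p$ and the linear span of the maximizing vectors of $H$ has dimension $p$. Let $\mathcal M_0$ be a finite dimensional subspace of $H^2_p$ with $S^*\mathcal M_0\subset\mathcal M_0$, let $P_0$ be the orthogonal projection onto $\mathcal M_0$, and put $\mathcal X_0=W\mathcal M_0^\perp\subset\mathcal X$. Then $\mathcal X_0$ is $Z$-invariant and, with $Z_0=Z|_{\mathcal X_0}:\mathcal X_0\to\mathcal X_0$, $\Pi_{\mathcal X_0}:\mathcal X\to\mathcal X_0$ the orthogonal projection, and $W_0=\Pi_{\mathcal X_0}W:H^2_p\to\mathcal X_0$, we have $r_{\mathrm{spec}}(Z_0)\le r_{\mathrm{spec}}(Z)$ and $Z^kW(I-P_0)=\Pi_{\mathcal X_0}^*Z_0^kW_0(I-P_0)$ for $k=0,1,2,\dots$.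
   Context: $H:H^2_p\to K^2_q$, $Hf=P_-(Gf)$, with $P_-$ the orthogonal projection of $L^2_q$ onto $K^2_q=L^2_q\ominus H^2_q$; $S$ forward shift on $H^2_p$; $V$ multiplication by $e^{it}$ on $L^2_q$, $V_-=P_-V|_{K^2_q}$; $\mathcal X=\overline{\operatorname{Im}H}=\operatorname{Im}H$; $Z=V_-|_{\mathcal X}:\mathcal X\to\mathcal X$; $W:H^2_p\to\mathcal X$, $Wf=Hf$. $\Pi_{\mathcal X_0}^*$ is the inclusion of $\mathcal X_0$ into $\mathcal X$. A maximizing vector of $H$ is a nonzero $h$ with $\|Hh\|=\|H\|\,\|h\|$. *)

theory Defs
  imports "HOL-Analysis.Analysis" "HOL-Library.Function_Algebras"
begin

text \<open>Model: a vector-valued L^2 function on the unit circle is represented by its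
 sequence of Fourier coefficients  f :: int => complex^'n  (square summable).
 H^2 = coefficients vanish for negative indices, K^2 = L^2 minus H^2 = coefficients
 vanish for nonnegative indices. Multiplication by e^{it} is the shift n |-> n+1.\<close>

definition vinner :: "complex^'n \<Rightarrow> complex^'n \<Rightarrow> complex" where
  "vinner x y = (\<Sum>i\<in>UNIV. x $ i * cnj (y $ i))"

definition cscale :: "complex \<Rightarrow> (int \<Rightarrow> complex^'n) \<Rightarrow> (int \<Rightarrow> complex^'n)" where
  "cscale c f = (\<lambda>k. c *s f k)"

definition L2 :: "(int \<Rightarrow> complex^'n) set" where
  "L2 = {f. (\<lambda>k. (norm (f k))\<^sup>2) summable_on UNIV}"

definition H2 :: "(int \<Rightarrow> complex^'n) set" where
  "H2 = {f \<in> L2. \<forall>k<0. f k = 0}"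

definition K2 :: "(int \<Rightarrow> complex^'n) set" where
  "K2 = {f \<in> L2. \<forall>k\<ge>0. f k = 0}"

definition l2norm :: "(int \<Rightarrow> complex^'n) \<Rightarrow> real" where
  "l2norm f = sqrt (infsum (\<lambda>k. (norm (f k))\<^sup>2) UNIV)"

definition l2inner :: "(int \<Rightarrow> complex^'n) \<Rightarrow> (int \<Rightarrow> complex^'n) \<Rightarrow> complex" where
  "l2inner f g = infsum (\<lambda>k. vinner (f k) (g k)) UNIV"

definition Linf :: "(real \<Rightarrow> complex^'p^'q) \<Rightarrow> bool" where
  "Linf G \<longleftrightarrow> set_borel_measurable lborel {0..2*pi} G \<and>
     (\<exists>C. AE t in lborel. t \<in> {0..2*pi} \<longrightarrow> norm (G t) \<le> C)"

definition fourier_coeff :: "(real \<Rightarrow> complex^'p^'q) \<Rightarrow> int \<Rightarrow> complex^'p^'q" where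
  "fourier_coeff G n = (\<chi> i j. integral {0..2*pi}
       (\<lambda>t. cis (- (real_of_int n * t)) * (G t $ i $ j)) / complex_of_real (2*pi))"

definition mult_op :: "(real \<Rightarrow> complex^'p^'q) \<Rightarrow> (int \<Rightarrow> complex^'p) \<Rightarrow> (int \<Rightarrow> complex^'q)" where
  "mult_op G f = (\<lambda>m. infsum (\<lambda>n. fourier_coeff G (m - n) *v f n) UNIV)"

definition Pminus :: "(int \<Rightarrow> complex^'n) \<Rightarrow> (int \<Rightarrow> complex^'n)" where
  "Pminus f = (\<lambda>k. if k < 0 then f k else 0)"

definition hankel :: "(real \<Rightarrow> complex^'p^'q) \<Rightarrow> (int \<Rightarrow> complex^'p) \<Rightarrow> (int \<Rightarrow> complex^'q)" where
  "hankel G f = Pminus (mult_op G f)"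

definition hankel_norm :: "(real \<Rightarrow> complex^'p^'q) \<Rightarrow> real" where
  "hankel_norm G = Sup {l2norm (hankel G f) | f. f \<in> H2 \<and> l2norm f \<le> 1}"

definition maximizing_vector :: "(real \<Rightarrow> complex^'p^'q) \<Rightarrow> (int \<Rightarrow> complex^'p) \<Rightarrow> bool" where
  "maximizing_vector G h \<longleftrightarrow> h \<in> H2 \<and> h \<noteq> 0 \<and>
      l2norm (hankel G h) = hankel_norm G * l2norm h"

definition shiftS :: "(int \<Rightarrow> complex^'n) \<Rightarrow> (int \<Rightarrow> complex^'n)" where
  "shiftS f = (\<lambda>k. f (k - 1))"

definition shiftS_adj :: "(int \<Rightarrow> complex^'n) \<Rightarrow> (int \<Rightarrow> complex^'n)" where
  "shiftS_adj f = (\<lambda>k. if k < 0 then 0 else f (k + 1))"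

definition multV :: "(int \<Rightarrow> complex^'n) \<Rightarrow> (int \<Rightarrow> complex^'n)" where
  "multV f = (\<lambda>k. f (k - 1))"

definition Vminus :: "(int \<Rightarrow> complex^'n) \<Rightarrow> (int \<Rightarrow> complex^'n)" where
  "Vminus g = Pminus (multV g)"

abbreviation csubspace :: "(int \<Rightarrow> complex^'n) set \<Rightarrow> bool" where
  "csubspace S \<equiv> module.subspace cscale S"

abbreviation cspan :: "(int \<Rightarrow> complex^'n) set \<Rightarrow> (int \<Rightarrow> complex^'n) set" where
  "cspan S \<equiv> module.span cscale S"

abbreviation cdim :: "(int \<Rightarrow> complex^'n) set \<Rightarrow> nat" where
  "cdim S \<equiv> vector_space.dim cscale S"

definition finite_rank :: "(real \<Rightarrow> complex^'p^'q) \<Rightarrow> bool" where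
  "finite_rank G \<longleftrightarrow> (\<exists>B. finite B \<and> hankel G ` H2 \<subseteq> cspan B)"

definition orth_proj :: "(int \<Rightarrow> complex^'n) set \<Rightarrow> (int \<Rightarrow> complex^'n) \<Rightarrow> (int \<Rightarrow> complex^'n)" where
  "orth_proj M f = (THE m. m \<in> M \<and> (\<forall>y\<in>M. l2inner (f - m) y = 0))"

definition orth_compl_in :: "(int \<Rightarrow> complex^'n) set \<Rightarrow> (int \<Rightarrow> complex^'n) set \<Rightarrow> (int \<Rightarrow> complex^'n) set" where
  "orth_compl_in A M = {f \<in> A. \<forall>m\<in>M. l2inner f m = 0}"

text \<open>Spectral radius of an operator T on a finite dimensional space X: the largest
 modulus of an eigenvalue (0 if X = {0}).\<close>
definition spec_radius :: "((int \<Rightarrow> complex^'n) \<Rightarrow> (int \<Rightarrow> complex^'n)) \<Rightarrow> (int \<Rightarrow> complex^'n) set \<Rightarrow> real" where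
  "spec_radius T X = Sup (insert 0 {cmod c | c. \<exists>x\<in>X. x \<noteq> 0 \<and> T x = cscale c x})"

end

theory Submission
  imports Defs
begin

text \<open>The Hankel operator intertwines the shifts, \<open>H S = V\<^sub>- H\<close>. Since \<open>S\<^sup>*\<close> leaves
 \<open>\<M>\<^sub>0\<close> invariant, \<open>S\<close> leaves \<open>H\<^sup>2 \<ominus> \<M>\<^sub>0\<close> invariant, hence \<open>\<X>\<^sub>0 = H(H\<^sup>2 \<ominus> \<M>\<^sub>0)\<close> is
 invariant under \<open>V\<^sub>-\<close>. So \<open>Z\<^sub>0\<close> is a restriction of \<open>Z\<close>: its eigenvalues are eigenvalues
 of \<open>Z\<close>, and its iterates agree with those of \<open>Z\<close> on \<open>\<X>\<^sub>0\<close>. Finally \<open>f - P\<^sub>0 f \<in> H\<^sup>2 \<ominus> \<M>\<^sub>0\<close>,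
 so \<open>W(f - P\<^sub>0 f) \<in> \<X>\<^sub>0\<close>, where the projection onto \<open>\<X>\<^sub>0\<close> is the identity.

 The analytic input is that \<open>H\<close> maps \<open>H\<^sup>2\<close> linearly into square-summable sequences (Bessel's
 inequality for \<open>G\<close> times trigonometric polynomials): without it the orthogonal projections
 would not be uniquely determined, and the eigenvalues of \<open>Z\<close> would not be bounded.\<close>

section \<open>Square-summable sequences\<close>

lemma cscale_apply: "cscale c f k = c *s f k"
  by (simp add: cscale_def)

interpretation cs: vector_space "cscale :: complex \<Rightarrow> (int \<Rightarrow> complex^'n) \<Rightarrow> _"
  by unfold_locales (auto simp: cscale_def fun_eq_iff vec_eq_iff algebra_simps)

lemma norm_vec_sq: "(norm (x :: complex^'n))\<^sup>2 = (\<Sum>i\<in>UNIV. (cmod (x $ i))\<^sup>2)"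
  by (simp add: norm_vec_def L2_set_def sum_nonneg)

lemma norm_vector_smult_sq: "(norm (c *s x))\<^sup>2 = (cmod c)\<^sup>2 * (norm (x :: complex^'n))\<^sup>2"
  by (simp add: norm_vec_sq norm_mult power_mult_distrib sum_distrib_left)

lemma vinner_self: "vinner x x = complex_of_real ((norm x)\<^sup>2)"
  unfolding vinner_def norm_vec_sq of_real_sum complex_norm_square by simp

lemma vinner_bound: "cmod (vinner x y) \<le> ((norm x)\<^sup>2 + (norm y)\<^sup>2) / 2"
proof -
  have "cmod (vinner x y) \<le> (\<Sum>i\<in>UNIV. cmod (x $ i) * cmod (y $ i))"
    unfolding vinner_def by (rule order_trans[OF norm_sum]) (simp add: norm_mult)
  also have "\<dots> \<le> (\<Sum>i\<in>UNIV. ((cmod (x $ i))\<^sup>2 + (cmod (y $ i))\<^sup>2) / 2)"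
  proof (rule sum_mono)
    fix i
    have "0 \<le> (cmod (x $ i) - cmod (y $ i))\<^sup>2" by simp
    then show "cmod (x $ i) * cmod (y $ i) \<le> ((cmod (x $ i))\<^sup>2 + (cmod (y $ i))\<^sup>2) / 2"
      by (simp add: power2_eq_square algebra_simps)
  qed
  also have "\<dots> = ((norm x)\<^sup>2 + (norm y)\<^sup>2) / 2"
    by (simp add: norm_vec_sq sum.distrib flip: sum_divide_distrib)
  finally show ?thesis .
qed

lemma vinner_diff_left: "vinner (x - y) z = vinner x z - vinner y z"
  by (simp add: vinner_def algebra_simps sum_subtractf)

lemma vinner_add_left: "vinner (x + y) z = vinner x z + vinner y z"
  by (simp add: vinner_def algebra_simps sum.distrib)

lemma vinner_scale_left: "vinner (c *s x) z = c * vinner x z"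
  by (simp add: vinner_def algebra_simps sum_distrib_left)

lemma vinner_sym: "vinner y x = cnj (vinner x y)"
  by (simp add: vinner_def mult.commute)

lemma vinner_zero_right [simp]: "vinner x 0 = 0"
  by (simp add: vinner_def)

lemma vinner_zero_left [simp]: "vinner 0 x = 0"
  by (simp add: vinner_def)

lemma norm_add_sq: "(norm (x + y :: 'a::real_normed_vector))\<^sup>2 \<le> 2 * (norm x)\<^sup>2 + 2 * (norm y)\<^sup>2"
proof -
  have "(norm (x + y))\<^sup>2 \<le> (norm x + norm y)\<^sup>2"
    by (simp add: norm_triangle_ineq power_mono)
  also have "\<dots> \<le> 2 * (norm x)\<^sup>2 + 2 * (norm y)\<^sup>2"
    using sum_squares_bound[of "norm x" "norm y"] by (simp add: power2_eq_square algebra_simps)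
  finally show ?thesis .
qed

lemma L2_zero [simp]: "0 \<in> L2"
  by (simp add: L2_def)

lemma L2_add: assumes "f \<in> L2" "g \<in> L2" shows "f + g \<in> L2"
proof -
  have s: "(\<lambda>k. 2 * (norm (f k))\<^sup>2 + 2 * (norm (g k))\<^sup>2) summable_on UNIV"
    using assms unfolding L2_def mem_Collect_eq
    by (intro summable_on_add summable_on_cmult_right)
  have "(\<lambda>k. (norm ((f + g) k))\<^sup>2) summable_on UNIV"
    by (rule summable_on_comparison_test[OF s]) (simp_all only: plus_fun_apply norm_add_sq zero_le_power2)
  then show ?thesis unfolding L2_def by simp
qed

lemma L2_scale: assumes "f \<in> L2" shows "cscale c f \<in> L2"
proof -
  have "(\<lambda>k. (cmod c)\<^sup>2 * (norm (f k))\<^sup>2) summable_on UNIV"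
    using assms unfolding L2_def mem_Collect_eq by (intro summable_on_cmult_right)
  then show ?thesis by (simp add: L2_def cscale_apply norm_vector_smult_sq)
qed

lemma L2_uminus: "f \<in> L2 \<Longrightarrow> - f \<in> L2"
  by (simp add: L2_def)

lemma L2_diff: "f \<in> L2 \<Longrightarrow> g \<in> L2 \<Longrightarrow> f - g \<in> L2"
  using L2_add[of f "- g"] L2_uminus[of g] by simp

lemma L2_subspace: "csubspace L2"
  unfolding cs.subspace_def using L2_add L2_scale by auto

lemma cspan_L2: "B \<subseteq> L2 \<Longrightarrow> cspan B \<subseteq> L2"
  by (rule cs.span_minimal[OF _ L2_subspace])

lemma H2_L2: "f \<in> H2 \<Longrightarrow> f \<in> L2"
  by (simp add: H2_def)

lemma H2_diff: "f \<in> H2 \<Longrightarrow> g \<in> H2 \<Longrightarrow> f - g \<in> H2"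
  by (auto simp: H2_def intro: L2_diff)

lemma vinner_summable:
  assumes "f \<in> L2" "g \<in> L2"
  shows "(\<lambda>k. vinner (f k) (g k)) summable_on UNIV"
proof -
  have "(\<lambda>k. ((norm (f k))\<^sup>2 + (norm (g k))\<^sup>2) / 2) summable_on UNIV"
    using assms unfolding L2_def mem_Collect_eq divide_inverse
    by (intro summable_on_add summable_on_cmult_left)
  then have "(\<lambda>k. norm (vinner (f k) (g k))) summable_on UNIV"
    by (rule Infinite_Sum.abs_summable_on_comparison_test') (rule vinner_bound)
  then show ?thesis by (rule abs_summable_summable)
qed

lemma infsum_diff:
  fixes f g :: "'a \<Rightarrow> 'b::{topological_ab_group_add, t2_space}"
  assumes "f summable_on A" "g summable_on A"
  shows "infsum (\<lambda>x. f x - g x) A = infsum f A - infsum g A"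
proof -
  have "infsum (\<lambda>x. f x + (- g x)) A = infsum f A + infsum (\<lambda>x. - g x) A"
    by (rule infsum_add) (use assms in \<open>simp_all add: summable_on_uminus\<close>)
  then show ?thesis by (simp add: infsum_uminus)
qed

lemma l2inner_diff_left:
  assumes "f \<in> L2" "g \<in> L2" "h \<in> L2"
  shows "l2inner (f - g) h = l2inner f h - l2inner g h"
  unfolding l2inner_def
  using infsum_diff[OF vinner_summable[OF assms(1,3)] vinner_summable[OF assms(2,3)]]
  by (simp add: vinner_diff_left)

lemma l2inner_add_left:
  assumes "f \<in> L2" "g \<in> L2" "h \<in> L2"
  shows "l2inner (f + g) h = l2inner f h + l2inner g h"
  unfolding l2inner_def
  using infsum_add[OF vinner_summable[OF assms(1,3)] vinner_summable[OF assms(2,3)]]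
  by (simp add: vinner_add_left)

lemma l2inner_scale_left: "l2inner (cscale c f) h = c * l2inner f h"
  unfolding l2inner_def by (simp add: cscale_apply vinner_scale_left infsum_cmult_right')

lemma l2inner_sym: "l2inner g f = cnj (l2inner f g)"
  unfolding l2inner_def by (subst vinner_sym) (simp add: infsum_cnj)

lemma l2inner_zero_right [simp]: "l2inner f 0 = 0"
  by (simp add: l2inner_def)

lemma l2inner_zero_left [simp]: "l2inner 0 f = 0"
  by (simp add: l2inner_def)

lemma l2inner_add_right:
  assumes "f \<in> L2" "g \<in> L2" "h \<in> L2"
  shows "l2inner h (f + g) = l2inner h f + l2inner h g"
  using l2inner_add_left[OF assms] by (metis complex_cnj_add l2inner_sym)

lemma l2inner_scale_right: "l2inner h (cscale c f) = cnj c * l2inner h f"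
  by (metis complex_cnj_cnj complex_cnj_mult l2inner_scale_left l2inner_sym)

lemma l2inner_self_zero:
  assumes "f \<in> L2" "l2inner f f = 0"
  shows "f = 0"
proof -
  have s: "(\<lambda>k. (norm (f k))\<^sup>2) summable_on UNIV" using assms by (simp add: L2_def)
  have "l2inner f f = infsum (\<lambda>k. complex_of_real ((norm (f k))\<^sup>2)) UNIV"
    by (simp add: l2inner_def vinner_self)
  also have "\<dots> = complex_of_real (infsum (\<lambda>k. (norm (f k))\<^sup>2) UNIV)"
    by (rule infsumI, rule has_sum_bounded_linear[OF bounded_linear_of_real has_sum_infsum[OF s]])
  finally have "infsum (\<lambda>k. (norm (f k))\<^sup>2) UNIV = 0" using assms by simp
  then have "(norm (f k))\<^sup>2 = 0" for k
    by (intro nonneg_infsum_le_0D[OF _ s]) auto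
  then show ?thesis by (auto simp: fun_eq_iff)
qed

section \<open>Orthogonal projections\<close>

lemma orth_proj_eqI:
  assumes A: "A \<subseteq> L2" "\<And>x y. x \<in> A \<Longrightarrow> y \<in> A \<Longrightarrow> x - y \<in> A"
    and f: "f \<in> L2" and m: "m \<in> A" "\<forall>y\<in>A. l2inner (f - m) y = 0"
  shows "orth_proj A f = m"
  unfolding orth_proj_def
proof (rule the_equality)
  show "m \<in> A \<and> (\<forall>y\<in>A. l2inner (f - m) y = 0)" using m by blast
next
  fix m' assume m': "m' \<in> A \<and> (\<forall>y\<in>A. l2inner (f - m') y = 0)"
  have d: "m - m' \<in> A" using A m m' by blast
  have L: "m \<in> L2" "m' \<in> L2" "m - m' \<in> L2" using A m m' d by auto
  have "m - m' = (f - m') - (f - m)" by simp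
  then have "l2inner (m - m') (m - m') = l2inner (f - m') (m - m') - l2inner (f - m) (m - m')"
    using l2inner_diff_left[of "f - m'" "f - m" "m - m'"] L f by (simp add: L2_diff)
  also have "\<dots> = 0" using m m' d by simp
  finally have "m - m' = 0" using l2inner_self_zero L by blast
  then show "m' = m" by simp
qed

definition is_orth_projector :: "(int \<Rightarrow> complex^'n) set \<Rightarrow> ((int \<Rightarrow> complex^'n) \<Rightarrow> (int \<Rightarrow> complex^'n)) \<Rightarrow> bool" where
  "is_orth_projector S p \<longleftrightarrow> (\<forall>f\<in>L2. p f \<in> S \<and> (\<forall>y\<in>S. l2inner (f - p f) y = 0))"

lemma cspan_insert_decompose:
  assumes "y \<in> cspan (insert b B)" "b - r \<in> cspan B"
  obtains k s where "s \<in> cspan B" "y = cscale k r + s"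
proof -
  obtain k where k: "y - cscale k b \<in> cspan B" using assms(1) cs.span_insert by blast
  have "y - cscale k r = (y - cscale k b) + cscale k (b - r)"
    by (simp add: fun_eq_iff cscale_def algebra_simps vector_ssub_ldistrib)
  then have "y - cscale k r \<in> cspan B" using k assms(2) by (metis cs.span_add cs.span_scale)
  then show ?thesis using that[of "y - cscale k r" k] by simp
qed

lemma orth_projector_insert:
  fixes B :: "(int \<Rightarrow> complex^'n) set"
  assumes p: "is_orth_projector (cspan B) p" and BL: "B \<subseteq> L2" and bL: "b \<in> L2"
    and r: "r = b - p b" "l2inner r r \<noteq> 0"
  shows "is_orth_projector (cspan (insert b B))
           (\<lambda>f. p f + cscale (l2inner (f - p f) r / l2inner r r) r)"
    (is "is_orth_projector _ ?p")
proof -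
  have SL: "cspan B \<subseteq> L2" using BL cspan_L2 by auto
  have pS: "p f \<in> cspan B" if "f \<in> L2" for f using p that by (auto simp: is_orth_projector_def)
  have pO: "l2inner (f - p f) y = 0" if "f \<in> L2" "y \<in> cspan B" for f y
    using p that by (auto simp: is_orth_projector_def)
  have rL: "r \<in> L2" unfolding r using bL pS SL by (auto intro: L2_diff)
  have "p b \<in> cspan (insert b B)" using cs.span_mono[of B "insert b B"] pS bL by auto
  then have rS: "r \<in> cspan (insert b B)" unfolding r
    by (intro cs.span_diff[OF cs.span_base[of b]]) auto
  show ?thesis
    unfolding is_orth_projector_def
  proof (intro ballI conjI)
    fix f :: "int \<Rightarrow> complex^'n" assume fL: "f \<in> L2"
    show "?p f \<in> cspan (insert b B)"
      using cs.span_mono[of B "insert b B"] pS[OF fL] rS by (intro cs.span_add cs.span_scale) auto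
    fix y assume "y \<in> cspan (insert b B)"
    moreover have "b - r \<in> cspan B" using pS[OF bL] by (simp add: r)
    ultimately obtain k s where sS: "s \<in> cspan B" and y: "y = cscale k r + s"
      by (rule cspan_insert_decompose)
    have sL: "s \<in> L2" using sS SL by auto
    define u where "u = f - p f"
    define a where "a = l2inner u r / l2inner r r"
    have uL: "u \<in> L2" unfolding u_def using fL pS SL by (auto intro: L2_diff)
    have krL: "cscale k r \<in> L2" "cscale a r \<in> L2" using rL by (auto intro: L2_scale)
    have "f - ?p f = u - cscale a r" unfolding u_def a_def by (simp add: algebra_simps)
    then have "l2inner (f - ?p f) y = l2inner u y - a * l2inner r y"
      using l2inner_diff_left[OF uL krL(2), of y] l2inner_scale_left[of a r y] y krL sL
      by (simp add: L2_add)
    also have "l2inner u y = cnj k * l2inner u r"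
      using y l2inner_add_right[OF krL(1) sL uL] pO[OF fL sS] l2inner_scale_right
      by (simp add: u_def)
    also have "l2inner r y = cnj k * l2inner r r"
      using y l2inner_add_right[OF krL(1) sL rL] pO[OF bL sS] l2inner_scale_right
      by (simp add: r)
    finally have "l2inner (f - ?p f) y = cnj k * l2inner u r - a * (cnj k * l2inner r r)" .
    also have "\<dots> = 0"
      using r(2) unfolding a_def by (simp add: field_simps)
    finally show "l2inner (f - ?p f) y = 0" .
  qed
qed

lemma orth_projector_span_exists:
  fixes B :: "(int \<Rightarrow> complex^'n) set"
  assumes "finite B" "B \<subseteq> L2"
  shows "\<exists>p. is_orth_projector (cspan B) p"
  using assms
proof (induction B rule: finite_induct)
  case empty
  show ?case by (rule exI[of _ "\<lambda>f. 0"]) (simp add: is_orth_projector_def fun_eq_iff)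
next
  case (insert b B)
  then obtain p where p: "is_orth_projector (cspan B) p" by auto
  have bL: "b \<in> L2" using insert by auto
  show ?case
  proof (cases "l2inner (b - p b) (b - p b) = 0")
    case True
    have "p b \<in> cspan B" using p bL by (auto simp: is_orth_projector_def)
    moreover have "b = p b"
      using l2inner_self_zero[OF _ True] p bL cspan_L2[of B] insert(4)
      by (auto simp: is_orth_projector_def intro: L2_diff)
    ultimately have "cspan (insert b B) = cspan B"
      by (metis cs.span_redundant)
    then show ?thesis using p by auto
  next
    case False
    then show ?thesis using orth_projector_insert[OF p _ bL refl] insert(4) by blast
  qed
qed

lemma residual_orth_proj_span_in_orth_compl:
  assumes B: "finite B" "cspan B \<subseteq> H2" and f: "f \<in> H2"
  shows "f - orth_proj (cspan B) f \<in> orth_compl_in H2 (cspan B)"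
proof -
  have BL: "B \<subseteq> L2" using B(2) cs.span_superset by (auto simp: H2_def)
  obtain p where p: "is_orth_projector (cspan B) p"
    using orth_projector_span_exists[OF B(1) BL] by blast
  have pf: "p f \<in> cspan B" "\<forall>y\<in>cspan B. l2inner (f - p f) y = 0"
    using p f by (auto simp: is_orth_projector_def H2_L2)
  have "orth_proj (cspan B) f = p f"
    using cspan_L2[OF BL] f pf by (intro orth_proj_eqI) (auto simp: H2_L2 cs.span_diff)
  then show ?thesis using pf f B(2) by (auto simp: orth_compl_in_def H2_diff)
qed

lemma orth_compl_in_H2_diff:
  assumes "M \<subseteq> L2" "f \<in> orth_compl_in H2 M" "g \<in> orth_compl_in H2 M"
  shows "f - g \<in> orth_compl_in H2 M"
  using assms by (auto simp: orth_compl_in_def H2_diff l2inner_diff_left H2_L2 subset_iff)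

section \<open>Shifts\<close>

lemma bij_int_succ: "bij_betw (\<lambda>j::int. j + 1) UNIV UNIV"
  by (rule bij_betwI[of _ _ _ "\<lambda>j. j - 1"]) auto

lemma infsum_int_shift: "infsum F (UNIV::int set) = infsum (\<lambda>j. F (j + 1)) UNIV"
  using infsum_reindex_bij_betw[OF bij_int_succ, of F] by simp

lemma summable_on_int_shift: "F summable_on (UNIV::int set) \<longleftrightarrow> (\<lambda>j. F (j + 1)) summable_on UNIV"
  using summable_on_reindex_bij_betw[OF bij_int_succ, of F] by simp

lemma shiftS_H2: assumes "f \<in> H2" shows "shiftS f \<in> H2"
proof -
  have "(\<lambda>k. (norm (f k))\<^sup>2) summable_on UNIV" using assms by (simp add: H2_def L2_def)
  then have "(\<lambda>k. (norm (f (k - 1)))\<^sup>2) summable_on UNIV"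
    by (subst summable_on_int_shift) simp
  then show ?thesis using assms by (auto simp: H2_def L2_def shiftS_def)
qed

lemma l2inner_shiftS:
  assumes "f \<in> H2"
  shows "l2inner (shiftS f) m = l2inner f (shiftS_adj m)"
proof -
  have "l2inner (shiftS f) m = infsum (\<lambda>j. vinner (f j) (m (j + 1))) UNIV"
    unfolding l2inner_def shiftS_def by (subst infsum_int_shift) simp
  also have "\<dots> = l2inner f (shiftS_adj m)"
    unfolding l2inner_def shiftS_adj_def
    using assms by (intro infsum_cong) (auto simp: H2_def)
  finally show ?thesis .
qed

lemma shiftS_orth_compl_in_H2:
  assumes inv: "shiftS_adj ` M \<subseteq> M" and f: "f \<in> orth_compl_in H2 M"
  shows "shiftS f \<in> orth_compl_in H2 M"
proof -
  have "l2inner (shiftS f) m = 0" if "m \<in> M" for m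
    using f inv that l2inner_shiftS[of f m] by (auto simp: orth_compl_in_def)
  then show ?thesis using f shiftS_H2 by (auto simp: orth_compl_in_def)
qed

lemma Vminus_eigenvector_powers:
  assumes eig: "Vminus x = cscale c x" and k0: "k0 < 0"
  shows "x (k0 - int j) = (c ^ j) *s x k0"
proof (induction j)
  case (Suc j)
  have "x (k0 - int (Suc j)) = Vminus x (k0 - int j)"
    using k0 by (simp add: Vminus_def Pminus_def multV_def algebra_simps)
  also have "\<dots> = c *s x (k0 - int j)" by (simp add: eig cscale_apply)
  finally show ?case using Suc by (simp add: vector_smult_assoc)
qed simp

text \<open>An eigenvector would grow geometrically towards \<open>-\<infinity>\<close>.\<close>

lemma Vminus_eigenvalue_norm_le_1:
  fixes x :: "int \<Rightarrow> complex^'n"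
  assumes xL: "x \<in> L2" and x0: "\<forall>k\<ge>0. x k = 0" and nz: "x \<noteq> 0"
    and eig: "Vminus x = cscale c x"
  shows "cmod c \<le> 1"
proof (rule ccontr)
  assume "\<not> cmod c \<le> 1"
  then have c1: "cmod c > 1" by simp
  obtain k0 where "x k0 \<noteq> 0" using nz by (auto simp: fun_eq_iff)
  then have k0: "k0 < 0" "x k0 \<noteq> 0" using x0 by (auto simp: not_le[symmetric])
  define d where "d = (norm (x k0))\<^sup>2"
  have d: "d > 0" using k0 by (simp add: d_def)
  have ge: "d \<le> (norm (x (k0 - int j)))\<^sup>2" for j
  proof -
    have "1 \<le> (cmod c ^ j)\<^sup>2" using c1 by (simp add: one_le_power)
    then have "1 * d \<le> (cmod c ^ j)\<^sup>2 * d" using d by (intro mult_right_mono) auto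
    then show ?thesis
      using Vminus_eigenvector_powers[OF eig k0(1), of j] by (simp add: d_def norm_vector_smult_sq norm_power)
  qed
  have s: "(\<lambda>k. (norm (x k))\<^sup>2) summable_on UNIV" using xL by (simp add: L2_def)
  define I where "I = infsum (\<lambda>k. (norm (x k))\<^sup>2) UNIV"
  obtain N :: nat where N: "I / d < real N" using reals_Archimedean2 by blast
  have inj: "inj (\<lambda>j::nat. k0 - int j)" by (auto simp: inj_def)
  have "real N * d \<le> (\<Sum>j<N. (norm (x (k0 - int j)))\<^sup>2)"
    using sum_bounded_below[of "{..<N}" d "\<lambda>j. (norm (x (k0 - int j)))\<^sup>2"] ge by simp
  also have "\<dots> = (\<Sum>k\<in>(\<lambda>j. k0 - int j) ` {..<N}. (norm (x k))\<^sup>2)"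
    using inj by (simp add: sum.reindex inj_on_def)
  also have "\<dots> \<le> I" unfolding I_def by (rule finite_sum_le_infsum[OF s]) auto
  finally show False using N d by (simp add: field_simps)
qed

section \<open>Fourier analysis on the circle\<close>

abbreviation "circle_measure \<equiv> restrict_space lborel {0..2*pi::real}"

lemma circle_sets: "{0..2*pi::real} \<inter> space lborel \<in> sets lborel" by simp

lemma space_circle_measure: "space circle_measure = {0..2*pi}" by (simp add: space_restrict_space)

lemma finite_measure_circle: "finite_measure circle_measure"
  by (rule finite_measureI) (simp add: space_circle_measure emeasure_restrict_space)

lemma circle_measure_id_measurable: "(\<lambda>t. t) \<in> borel_measurable circle_measure"
  by (rule measurable_restrict_space1) simp

definition cis_int :: "int \<Rightarrow> real \<Rightarrow> complex" where
  "cis_int k t = cis (of_int k * t)"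

lemma cis_int_measurable: "cis_int k \<in> borel_measurable circle_measure"
proof -
  have "(\<lambda>t. cis (of_int k * t)) \<in> borel_measurable circle_measure"
    by (rule borel_measurable_continuous_on[OF _ circle_measure_id_measurable]) (intro continuous_intros)
  then show ?thesis by (simp add: cis_int_def[abs_def])
qed

lemma cis_int_mult: "cis_int a t * cis_int b t = cis_int (a + b) t"
  by (simp add: cis_int_def cis_mult algebra_simps)

lemma cis_int_cnj: "cnj (cis_int a t) = cis_int (- a) t"
  by (simp add: cis_int_def cis_cnj)

lemma norm_cis_int [simp]: "cmod (cis_int a t) = 1"
  by (simp add: cis_int_def)

definition bounded_meas :: "(real \<Rightarrow> complex) \<Rightarrow> bool" where
  "bounded_meas a \<longleftrightarrow> a \<in> borel_measurable circle_measure \<and> (\<exists>B. AE t in circle_measure. cmod (a t) \<le> B)"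

lemma bounded_meas_integrable: "bounded_meas a \<Longrightarrow> integrable circle_measure a"
  unfolding bounded_meas_def using finite_measure.integrable_const_bound[OF finite_measure_circle] by auto

lemma bounded_meas_cis_int: "bounded_meas (cis_int k)"
  unfolding bounded_meas_def using cis_int_measurable by auto

lemma bounded_meas_const: "bounded_meas (\<lambda>t. c)"
  unfolding bounded_meas_def by auto

lemma bounded_meas_add: assumes "bounded_meas a" "bounded_meas b" shows "bounded_meas (\<lambda>t. a t + b t)"
proof -
  obtain A B where A: "AE t in circle_measure. cmod (a t) \<le> A" and B: "AE t in circle_measure. cmod (b t) \<le> B"
    using assms by (auto simp: bounded_meas_def)
  have "AE t in circle_measure. cmod (a t + b t) \<le> A + B"
    using A B by eventually_elim (meson add_mono norm_triangle_ineq order_trans)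
  then show ?thesis using assms unfolding bounded_meas_def by auto
qed

lemma bounded_meas_mult: assumes "bounded_meas a" "bounded_meas b" shows "bounded_meas (\<lambda>t. a t * b t)"
proof -
  obtain A B where A: "AE t in circle_measure. cmod (a t) \<le> A" and B: "AE t in circle_measure. cmod (b t) \<le> B"
    using assms by (auto simp: bounded_meas_def)
  have "AE t in circle_measure. cmod (a t * b t) \<le> A * B"
    using A B by eventually_elim (simp add: norm_mult mult_mono order_trans[OF norm_ge_zero])
  then show ?thesis using assms unfolding bounded_meas_def by auto
qed

lemma bounded_meas_cnj: assumes "bounded_meas a" shows "bounded_meas (\<lambda>t. cnj (a t))"
proof -
  have "(\<lambda>t. cnj (a t)) \<in> borel_measurable circle_measure"
    using assms unfolding bounded_meas_def
    by (intro borel_measurable_continuous_on[where f=cnj]) (auto intro: continuous_intros)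
  then show ?thesis using assms unfolding bounded_meas_def by auto
qed

lemma bounded_meas_sum: assumes "\<And>i. i \<in> I \<Longrightarrow> bounded_meas (a i)" shows "bounded_meas (\<lambda>t. \<Sum>i\<in>I. a i t)"
  using assms
proof (induction I rule: infinite_finite_induct)
  case (infinite I) then show ?case by (simp add: bounded_meas_const)
next
  case empty then show ?case by (simp add: bounded_meas_const)
next
  case (insert x F) then show ?case by (simp add: bounded_meas_add)
qed

lemmas bounded_meas_intros =
  bounded_meas_sum bounded_meas_mult bounded_meas_cnj bounded_meas_const bounded_meas_cis_int

lemma integral_sum_circle:
  "(\<And>i. i \<in> I \<Longrightarrow> bounded_meas (f i)) \<Longrightarrow>
    integral\<^sup>L circle_measure (\<lambda>t. \<Sum>i\<in>I. f i t) = (\<Sum>i\<in>I. integral\<^sup>L circle_measure (f i))"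
  by (intro Bochner_Integration.integral_sum bounded_meas_integrable)

lemma lebesgue_integral_circle_eq_integral:
  fixes f :: "real \<Rightarrow> complex"
  assumes "integrable circle_measure f"
  shows "integral\<^sup>L circle_measure f = integral {0..2*pi} f"
proof -
  have si: "set_integrable lborel {0..2*pi} f"
    using assms integrable_restrict_space[OF circle_sets, of f] unfolding set_integrable_def by blast
  have "integral\<^sup>L circle_measure f = set_lebesgue_integral lborel {0..2*pi} f"
    by (simp add: integral_restrict_space[OF circle_sets] set_lebesgue_integral_def)
  also have "\<dots> = integral {0..2*pi} f" by (rule set_borel_integral_eq_integral(2)[OF si])
  finally show ?thesis .
qed

lemma integral_cis_int: "integral {0..2*pi} (cis_int k) = (if k = 0 then 2*pi else 0)"
proof (cases "k = 0")
  case True then show ?thesis by (simp add: cis_int_def[abs_def] scaleR_conv_of_real)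
next
  case False
  have "((\<lambda>t. cis (of_int k * t)) has_integral
      ((- \<i> * cis (of_int k * (2*pi)) / of_int k) - (- \<i> * cis (of_int k * 0) / of_int k))) {0..2*pi}"
  proof (rule fundamental_theorem_of_calculus)
    show "((\<lambda>t. - \<i> * cis (of_int k * t) / of_int k) has_vector_derivative cis (of_int k * x)) (at x within {0..2*pi})"
      for x
      using False unfolding has_vector_derivative_def
      by (auto intro!: derivative_eq_intros simp: fun_eq_iff scaleR_conv_of_real field_simps)
  qed auto
  moreover have "cis (of_int k * (2*pi)) = 1"
    by (metis cis_multiple_2pi mult.commute Ints_of_int)
  ultimately have "(cis_int k has_integral 0) {0..2*pi}" by (simp add: cis_int_def[abs_def])
  then show ?thesis using False by (simp add: integral_unique)
qed

lemma lebesgue_integral_cis_int: "integral\<^sup>L circle_measure (cis_int k) = (if k = 0 then 2*pi else 0)"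
  using lebesgue_integral_circle_eq_integral[OF bounded_meas_integrable[OF bounded_meas_cis_int]] integral_cis_int by simp

lemma cis_int_orthogonal: "integral\<^sup>L circle_measure (\<lambda>t. cis_int a t * cnj (cis_int b t)) = (if a = b then 2*pi else 0)"
  using lebesgue_integral_cis_int[of "a - b"] by (simp add: cis_int_cnj cis_int_mult)

definition fcoeff :: "(real \<Rightarrow> complex) \<Rightarrow> int \<Rightarrow> complex" where
  "fcoeff a m = integral\<^sup>L circle_measure (\<lambda>t. cis_int (- m) t * a t) / (2 * pi)"

lemma integral_trig_poly_inner:
  assumes "finite F"
  shows "integral\<^sup>L circle_measure (\<lambda>t. (\<Sum>n\<in>F. b n * cis_int n t) * cnj (\<Sum>m\<in>F. d m * cis_int m t))
         = 2 * pi * (\<Sum>n\<in>F. b n * cnj (d n))"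
proof -
  have eq: "(\<Sum>n\<in>F. b n * cis_int n t) * cnj (\<Sum>m\<in>F. d m * cis_int m t)
       = (\<Sum>n\<in>F. \<Sum>m\<in>F. (b n * cnj (d m)) * (cis_int n t * cnj (cis_int m t)))" for t
    by (simp add: sum_product cnj_sum algebra_simps)
  have "integral\<^sup>L circle_measure (\<lambda>t. (\<Sum>n\<in>F. b n * cis_int n t) * cnj (\<Sum>m\<in>F. d m * cis_int m t))
      = (\<Sum>n\<in>F. \<Sum>m\<in>F. (b n * cnj (d m)) * integral\<^sup>L circle_measure (\<lambda>t. cis_int n t * cnj (cis_int m t)))"
    unfolding eq
    by (simp add: integral_sum_circle bounded_meas_intros)
  also have "\<dots> = (\<Sum>n\<in>F. (b n * cnj (d n)) * (2 * pi))"
    unfolding cis_int_orthogonal using assms by (simp add: if_distrib sum.delta cong: if_cong)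
  finally show ?thesis by (simp add: sum_distrib_left algebra_simps)
qed

lemma integral_inner_trig_poly:
  assumes "bounded_meas a" "finite F"
  shows "integral\<^sup>L circle_measure (\<lambda>t. a t * cnj (\<Sum>m\<in>F. d m * cis_int m t))
         = 2 * pi * (\<Sum>m\<in>F. fcoeff a m * cnj (d m))"
proof -
  have eq: "a t * cnj (\<Sum>m\<in>F. d m * cis_int m t) = (\<Sum>m\<in>F. cnj (d m) * (cis_int (- m) t * a t))" for t
    by (simp add: cnj_sum sum_distrib_left cis_int_cnj algebra_simps)
  have "integral\<^sup>L circle_measure (\<lambda>t. a t * cnj (\<Sum>m\<in>F. d m * cis_int m t))
      = (\<Sum>m\<in>F. cnj (d m) * integral\<^sup>L circle_measure (\<lambda>t. cis_int (- m) t * a t))"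
    unfolding eq
    by (simp add: integral_sum_circle bounded_meas_intros assms(1))
  also have "\<dots> = (\<Sum>m\<in>F. 2 * pi * (fcoeff a m * cnj (d m)))"
    by (simp add: fcoeff_def mult.commute)
  finally show ?thesis by (simp add: sum_distrib_left)
qed

lemma integral_mult_cnj_self: "integral\<^sup>L circle_measure (\<lambda>t. x t * cnj (x t)) = complex_of_real (integral\<^sup>L circle_measure (\<lambda>t. (cmod (x t))\<^sup>2))"
  by (simp only: complex_norm_square[symmetric] integral_complex_of_real)

lemma bessel_inequality:
  assumes a: "bounded_meas a" and F: "finite F"
  shows "(\<Sum>m\<in>F. (cmod (fcoeff a m))\<^sup>2) \<le> integral\<^sup>L circle_measure (\<lambda>t. (cmod (a t))\<^sup>2) / (2 * pi)"
proof -
  define P where "P t = (\<Sum>m\<in>F. fcoeff a m * cis_int m t)" for t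
  define R where "R = (\<Sum>m\<in>F. (cmod (fcoeff a m))\<^sup>2)"
  have S: "(\<Sum>m\<in>F. fcoeff a m * cnj (fcoeff a m)) = complex_of_real R"
    unfolding R_def of_real_sum by (simp only: complex_norm_square)
  have bP: "bounded_meas P" unfolding P_def[abs_def] by (intro bounded_meas_intros)
  have I2: "integral\<^sup>L circle_measure (\<lambda>t. a t * cnj (P t)) = 2 * pi * complex_of_real R"
    unfolding P_def using integral_inner_trig_poly[OF a F] S by simp
  have I3: "integral\<^sup>L circle_measure (\<lambda>t. P t * cnj (a t)) = 2 * pi * complex_of_real R"
  proof -
    have "integral\<^sup>L circle_measure (\<lambda>t. P t * cnj (a t)) = cnj (integral\<^sup>L circle_measure (\<lambda>t. a t * cnj (P t)))"
      by (simp only: Bochner_Integration.integral_cnj[symmetric] complex_cnj_mult complex_cnj_cnj mult.commute)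
    then show ?thesis using I2 by simp
  qed
  have I4: "integral\<^sup>L circle_measure (\<lambda>t. P t * cnj (P t)) = 2 * pi * complex_of_real R"
    unfolding P_def using integral_trig_poly_inner[OF F, of "fcoeff a" "fcoeff a"] S by simp
  have ex: "(a t - P t) * cnj (a t - P t) = ((a t * cnj (a t) - a t * cnj (P t)) - P t * cnj (a t)) + P t * cnj (P t)" for t
    by (simp add: algebra_simps)
  have ints: "integrable circle_measure (\<lambda>t. a t * cnj (a t))" "integrable circle_measure (\<lambda>t. a t * cnj (P t))"
    "integrable circle_measure (\<lambda>t. P t * cnj (a t))" "integrable circle_measure (\<lambda>t. P t * cnj (P t))"
    by (intro bounded_meas_integrable bounded_meas_intros a bP)+
  have "integral\<^sup>L circle_measure (\<lambda>t. (a t - P t) * cnj (a t - P t))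
      = integral\<^sup>L circle_measure (\<lambda>t. a t * cnj (a t)) - 2 * pi * complex_of_real R"
    unfolding ex using ints I2 I3 I4 by simp
  then have "complex_of_real (integral\<^sup>L circle_measure (\<lambda>t. (cmod (a t - P t))\<^sup>2))
      = complex_of_real (integral\<^sup>L circle_measure (\<lambda>t. (cmod (a t))\<^sup>2) - 2 * pi * R)"
    unfolding integral_mult_cnj_self by simp
  then have eqr: "integral\<^sup>L circle_measure (\<lambda>t. (cmod (a t - P t))\<^sup>2) = integral\<^sup>L circle_measure (\<lambda>t. (cmod (a t))\<^sup>2) - 2 * pi * R"
    using of_real_eq_iff by blast
  have "0 \<le> integral\<^sup>L circle_measure (\<lambda>t. (cmod (a t - P t))\<^sup>2)" by (rule integral_nonneg_AE) simp
  then have "2 * pi * R \<le> integral\<^sup>L circle_measure (\<lambda>t. (cmod (a t))\<^sup>2)" using eqr by simp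
  then show ?thesis unfolding R_def by (simp add: field_simps)
qed

lemma integrable_norm_sq: assumes "bounded_meas a" shows "integrable circle_measure (\<lambda>t. (cmod (a t))\<^sup>2)"
proof -
  obtain B where B: "AE t in circle_measure. cmod (a t) \<le> B" and m: "a \<in> borel_measurable circle_measure"
    using assms by (auto simp: bounded_meas_def)
  have "AE t in circle_measure. norm ((cmod (a t))\<^sup>2) \<le> B\<^sup>2"
    using B by eventually_elim (simp add: power_mono)
  moreover have "(\<lambda>t. (cmod (a t))\<^sup>2) \<in> borel_measurable circle_measure"
    by (rule borel_measurable_continuous_on[where f="\<lambda>z. (cmod z)\<^sup>2", OF _ m]) (intro continuous_intros)
  ultimately show ?thesis by (rule finite_measure.integrable_const_bound[OF finite_measure_circle])
qed

lemma integral_norm_sq_trig_poly: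
  assumes "finite F"
  shows "integral\<^sup>L circle_measure (\<lambda>t. (cmod (\<Sum>n\<in>F. b n * cis_int n t))\<^sup>2) = 2 * pi * (\<Sum>n\<in>F. (cmod (b n))\<^sup>2)"
proof -
  have "complex_of_real (integral\<^sup>L circle_measure (\<lambda>t. (cmod (\<Sum>n\<in>F. b n * cis_int n t))\<^sup>2))
      = 2 * pi * (\<Sum>n\<in>F. b n * cnj (b n))"
    using integral_trig_poly_inner[OF assms, of b b] unfolding integral_mult_cnj_self by simp
  also have "\<dots> = complex_of_real (2 * pi * (\<Sum>n\<in>F. (cmod (b n))\<^sup>2))"
    unfolding of_real_mult of_real_sum by (simp only: complex_norm_square)
  finally show ?thesis using of_real_eq_iff by blast
qed

section \<open>The Hankel operator\<close>

lemma norm_matrix_sq: "(norm (A :: complex^'p^'q))\<^sup>2 = (\<Sum>i\<in>UNIV. \<Sum>j\<in>UNIV. (cmod (A $ i $ j))\<^sup>2)"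
  by (simp add: norm_vec_def L2_set_def sum_nonneg norm_vec_sq)

lemma matrix_vector_mult_component: "((A :: complex^'p^'q) *v x) $ i = (\<Sum>j\<in>UNIV. A $ i $ j * x $ j)"
  by (simp add: matrix_vector_mult_def)

lemma norm_matrix_vector_mult_le:
  "norm ((A :: complex^'p^'q) *v x) \<le> real CARD('q) * (real CARD('p) * (norm A * norm x))"
proof -
  have c: "cmod ((A *v x) $ i) \<le> real CARD('p) * (norm A * norm x)" for i
  proof -
    have "cmod ((A *v x) $ i) \<le> (\<Sum>j\<in>UNIV. cmod (A $ i $ j) * cmod (x $ j))"
      unfolding matrix_vector_mult_component by (rule order_trans[OF norm_sum]) (simp add: norm_mult)
    also have "\<dots> \<le> (\<Sum>j\<in>(UNIV::'p set). norm A * norm x)"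
    proof (rule sum_mono)
      fix j
      have "cmod (A $ i $ j) \<le> norm A"
        using Finite_Cartesian_Product.norm_nth_le[of "A $ i" j] Finite_Cartesian_Product.norm_nth_le[of A i]
        by linarith
      moreover have "cmod (x $ j) \<le> norm x" by (rule Finite_Cartesian_Product.norm_nth_le)
      ultimately show "cmod (A $ i $ j) * cmod (x $ j) \<le> norm A * norm x"
        by (intro mult_mono) auto
    qed
    finally show ?thesis by simp
  qed
  have "norm (A *v x) \<le> (\<Sum>i\<in>UNIV. cmod ((A *v x) $ i))"
    unfolding norm_vec_def by (rule L2_set_le_sum) auto
  also have "\<dots> \<le> (\<Sum>i\<in>(UNIV::'q set). real CARD('p) * (norm A * norm x))"
    by (rule sum_mono) (rule c)
  finally show ?thesis by simp
qed

lemma norm_matrix_vector_mult_sq_le: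
  assumes "norm (A :: complex^'p^'q) \<le> C"
  shows "(norm (A *v x))\<^sup>2 \<le> (real CARD('q) * real CARD('p) * C)\<^sup>2 * (norm x)\<^sup>2"
proof -
  have "(norm (A *v x))\<^sup>2 \<le> (real CARD('q) * real CARD('p) * (norm A * norm x))\<^sup>2"
    using norm_matrix_vector_mult_le[of A x] by (intro power_mono) (auto simp: mult.assoc)
  also have "\<dots> \<le> (real CARD('q) * real CARD('p) * (C * norm x))\<^sup>2"
    using assms by (intro power_mono mult_left_mono mult_right_mono) auto
  finally show ?thesis by (simp add: power_mult_distrib)
qed

lemma Linf_measurable: "Linf G \<Longrightarrow> G \<in> borel_measurable circle_measure"
  unfolding Linf_def set_borel_measurable_def
  using borel_measurable_restrict_space_iff[OF circle_sets] by blast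

lemma Linf_AE_bound:
  assumes "Linf G" obtains C where "AE t in circle_measure. norm (G t) \<le> C"
proof -
  from assms obtain C where "AE t in lborel. t \<in> {0..2*pi} \<longrightarrow> norm (G t) \<le> C"
    unfolding Linf_def by blast
  then have "AE t in circle_measure. norm (G t) \<le> C"
    using AE_restrict_space_iff[OF circle_sets] by blast
  then show ?thesis using that by blast
qed

lemma Linf_entry_bounded_meas:
  fixes G :: "real \<Rightarrow> complex^'p^'q"
  assumes "Linf G" shows "bounded_meas (\<lambda>t. G t $ i $ j)"
proof -
  obtain C where C: "AE t in circle_measure. norm (G t) \<le> C" using Linf_AE_bound[OF assms] by blast
  have "AE t in circle_measure. cmod (G t $ i $ j) \<le> C"
    using C
  proof eventually_elim
    fix t assume "norm (G t) \<le> C"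
    then show "cmod (G t $ i $ j) \<le> C"
      using Finite_Cartesian_Product.norm_nth_le[of "G t $ i" j] Finite_Cartesian_Product.norm_nth_le[of "G t" i]
      by linarith
  qed
  moreover have "(\<lambda>t. G t $ i $ j) \<in> borel_measurable circle_measure"
    by (rule borel_measurable_continuous_on[where f="\<lambda>A. A $ i $ j", OF _ Linf_measurable[OF assms]])
       (intro continuous_intros)
  ultimately show ?thesis unfolding bounded_meas_def by blast
qed

lemma fourier_coeff_entry:
  fixes G :: "real \<Rightarrow> complex^'p^'q"
  assumes "Linf G"
  shows "fourier_coeff G n $ i $ j = fcoeff (\<lambda>t. G t $ i $ j) n"
proof -
  have "integral\<^sup>L circle_measure (\<lambda>t. cis_int (- n) t * G t $ i $ j) = integral {0..2*pi} (\<lambda>t. cis_int (- n) t * G t $ i $ j)"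
    by (rule lebesgue_integral_circle_eq_integral, rule bounded_meas_integrable, intro bounded_meas_intros Linf_entry_bounded_meas assms)
  then show ?thesis
    by (simp add: fourier_coeff_def fcoeff_def cis_int_def)
qed

lemma fourier_coeff_square_summable:
  fixes G :: "real \<Rightarrow> complex^'p^'q"
  assumes G: "Linf G"
  shows "(\<lambda>n. (norm (fourier_coeff G n))\<^sup>2) summable_on UNIV"
proof (rule nonneg_bdd_above_summable_on)
  define Bd where "Bd = (\<Sum>i\<in>(UNIV::'q set). \<Sum>j\<in>(UNIV::'p set).
       integral\<^sup>L circle_measure (\<lambda>t. (cmod (G t $ i $ j))\<^sup>2) / (2 * pi))"
  show "bdd_above (sum (\<lambda>n. (norm (fourier_coeff G n))\<^sup>2) ` {F. F \<subseteq> UNIV \<and> finite F})"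
  proof (rule bdd_aboveI[of _ Bd])
    fix y assume "y \<in> sum (\<lambda>n. (norm (fourier_coeff G n))\<^sup>2) ` {F. F \<subseteq> UNIV \<and> finite F}"
    then obtain F where F: "finite F" and y: "y = (\<Sum>n\<in>F. (norm (fourier_coeff G n))\<^sup>2)" by auto
    have "y = (\<Sum>i\<in>UNIV. \<Sum>j\<in>UNIV. \<Sum>n\<in>F. (cmod (fcoeff (\<lambda>t. G t $ i $ j) n))\<^sup>2)"
      unfolding y norm_matrix_sq fourier_coeff_entry[OF G]
      by (subst sum.swap) (subst (2) sum.swap, simp)
    also have "\<dots> \<le> Bd" unfolding Bd_def
      by (intro sum_mono bessel_inequality Linf_entry_bounded_meas G F)
    finally show "y \<le> Bd" .
  qed
qed simp

lemma convolution_summable: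
  fixes G :: "real \<Rightarrow> complex^'p^'q"
  assumes G: "Linf G" and f: "f \<in> L2"
  shows "(\<lambda>n. fourier_coeff G (m - n) *v f n) summable_on UNIV"
proof -
  define K where "K = real CARD('q) * real CARD('p)"
  have bij: "bij_betw (\<lambda>n::int. m - n) UNIV UNIV"
    by (rule bij_betwI[of _ _ _ "\<lambda>n. m - n"]) auto
  have s1: "(\<lambda>n. (norm (fourier_coeff G (m - n)))\<^sup>2) summable_on UNIV"
    using summable_on_reindex_bij_betw[OF bij, of "\<lambda>n. (norm (fourier_coeff G n))\<^sup>2"] fourier_coeff_square_summable[OF G]
    by simp
  have s2: "(\<lambda>n. (norm (f n))\<^sup>2) summable_on UNIV" using f by (simp add: L2_def)
  have s: "(\<lambda>n. K * (((norm (fourier_coeff G (m - n)))\<^sup>2 + (norm (f n))\<^sup>2) / 2)) summable_on UNIV"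
    unfolding divide_inverse
    by (intro summable_on_cmult_right summable_on_cmult_left summable_on_add s1 s2)
  have b: "norm (fourier_coeff G (m - n) *v f n) \<le> K * (((norm (fourier_coeff G (m - n)))\<^sup>2 + (norm (f n))\<^sup>2) / 2)" for n
  proof -
    have "norm (fourier_coeff G (m - n) *v f n) \<le> K * (norm (fourier_coeff G (m - n)) * norm (f n))"
      using norm_matrix_vector_mult_le[of "fourier_coeff G (m - n)" "f n"] unfolding K_def by (simp add: mult.assoc)
    also have "\<dots> \<le> K * (((norm (fourier_coeff G (m - n)))\<^sup>2 + (norm (f n))\<^sup>2) / 2)"
    proof (rule mult_left_mono)
      have "0 \<le> (norm (fourier_coeff G (m - n)) - norm (f n))\<^sup>2" by simp
      then show "norm (fourier_coeff G (m - n)) * norm (f n) \<le> ((norm (fourier_coeff G (m - n)))\<^sup>2 + (norm (f n))\<^sup>2) / 2"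
        by (simp add: power2_eq_square algebra_simps)
    qed (simp add: K_def)
    finally show ?thesis .
  qed
  have "(\<lambda>n. norm (fourier_coeff G (m - n) *v f n)) summable_on UNIV"
    by (rule Infinite_Sum.abs_summable_on_comparison_test'[OF s]) (rule b)
  then show ?thesis by (rule abs_summable_summable)
qed

lemma hankel_diff:
  fixes G :: "real \<Rightarrow> complex^'p^'q"
  assumes G: "Linf G" and f: "f \<in> L2" and g: "g \<in> L2"
  shows "hankel G (f - g) = hankel G f - hankel G g"
proof -
  have "mult_op G (f - g) m = mult_op G f m - mult_op G g m" for m
  proof -
    have "mult_op G (f - g) m = infsum (\<lambda>n. fourier_coeff G (m - n) *v f n - fourier_coeff G (m - n) *v g n) UNIV"
      unfolding mult_op_def by (simp add: matrix_vector_mult_diff_distrib)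
    also have "\<dots> = mult_op G f m - mult_op G g m"
      unfolding mult_op_def by (rule infsum_diff[OF convolution_summable[OF G f] convolution_summable[OF G g]])
    finally show ?thesis .
  qed
  then show ?thesis by (simp add: hankel_def Pminus_def fun_eq_iff)
qed

lemma partial_sums_nonneg_tendsto:
  fixes h :: "int \<Rightarrow> 'b::banach"
  assumes s: "h summable_on UNIV" and z: "\<And>n. n < 0 \<Longrightarrow> h n = 0"
  shows "(\<lambda>N. \<Sum>n\<in>int ` {..<N}. h n) \<longlonglongrightarrow> infsum h UNIV"
proof -
  have ri: "x \<in> range int" if "x \<ge> 0" for x :: int
    using that by (metis nat_0_le rangeI)
  have e1: "infsum h UNIV = infsum h (range int)"
  proof (rule infsum_cong_neutral)
    fix x assume "x \<in> UNIV - range int"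
    then have "\<not> x \<ge> 0" using ri by blast
    then show "h x = 0" by (intro z) simp
  qed auto
  have s1: "h summable_on (range int)" using summable_on_subset_banach[OF s] by blast
  have e2: "infsum h (range int) = infsum (h \<circ> int) UNIV"
    by (rule infsum_reindex) simp
  have s2: "(h \<circ> int) summable_on UNIV"
    using s1 summable_on_reindex[of int UNIV h] by simp
  have "(h \<circ> int) sums infsum (h \<circ> int) UNIV"
    by (rule has_sum_imp_sums, rule has_sum_infsum[OF s2])
  then have "(\<lambda>N. \<Sum>k<N. h (int k)) \<longlonglongrightarrow> infsum h UNIV"
    unfolding sums_def e1 e2 by simp
  moreover have "(\<Sum>n\<in>int ` {..<N}. h n) = (\<Sum>k<N. h (int k))" for N
    by (simp add: sum.reindex)
  ultimately show ?thesis by simp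
qed

lemma fcoeff_mult_trig_poly:
  fixes G :: "real \<Rightarrow> complex^'p^'q"
  assumes G: "Linf G" and T: "finite T"
  shows "fcoeff (\<lambda>t. \<Sum>j\<in>UNIV. G t $ i $ j * (\<Sum>n\<in>T. f n $ j * cis_int n t)) m
       = (\<Sum>n\<in>T. fourier_coeff G (m - n) *v f n) $ i"
proof -
  have e: "cis_int (- (m - n)) t = cis_int (- m) t * cis_int n t" for n t by (simp add: cis_int_mult)
  have pw: "cis_int (- m) t * (\<Sum>j\<in>UNIV. G t $ i $ j * (\<Sum>n\<in>T. f n $ j * cis_int n t))
      = (\<Sum>j\<in>UNIV. \<Sum>n\<in>T. f n $ j * (cis_int (- (m - n)) t * G t $ i $ j))" for t
    unfolding e by (simp add: sum_distrib_left algebra_simps)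
  have "integral\<^sup>L circle_measure (\<lambda>t. cis_int (- m) t * (\<Sum>j\<in>UNIV. G t $ i $ j * (\<Sum>n\<in>T. f n $ j * cis_int n t)))
      = (\<Sum>j\<in>UNIV. \<Sum>n\<in>T. f n $ j * integral\<^sup>L circle_measure (\<lambda>t. cis_int (- (m - n)) t * G t $ i $ j))"
    unfolding pw
    by (simp add: integral_sum_circle bounded_meas_intros Linf_entry_bounded_meas[OF G])
  also have "\<dots> = (\<Sum>j\<in>UNIV. \<Sum>n\<in>T. f n $ j * (2 * pi * fourier_coeff G (m - n) $ i $ j))"
    by (simp add: fourier_coeff_entry[OF G] fcoeff_def)
  finally have "fcoeff (\<lambda>t. \<Sum>j\<in>UNIV. G t $ i $ j * (\<Sum>n\<in>T. f n $ j * cis_int n t)) m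
      = (\<Sum>j\<in>UNIV. \<Sum>n\<in>T. f n $ j * fourier_coeff G (m - n) $ i $ j)"
    by (simp add: fcoeff_def sum_divide_distrib sum_distrib_left algebra_simps)
  also have "\<dots> = (\<Sum>n\<in>T. fourier_coeff G (m - n) *v f n) $ i"
    by (subst sum.swap) (simp add: matrix_vector_mult_component mult.commute)
  finally show ?thesis .
qed

text \<open>The truncated convolution is the Fourier coefficient sequence of \<open>G\<close> times a vector
 trigonometric polynomial, so Bessel's inequality bounds it.\<close>

lemma truncated_convolution_bound:
  fixes G :: "real \<Rightarrow> complex^'p^'q"
  assumes G: "Linf G" and C: "AE t in circle_measure. norm (G t) \<le> C" and T: "finite T" and F: "finite F"
  shows "(\<Sum>m\<in>F. (norm (\<Sum>n\<in>T. fourier_coeff G (m - n) *v f n))\<^sup>2)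
         \<le> (real CARD('q) * real CARD('p) * C)\<^sup>2 * (\<Sum>n\<in>T. (norm (f n))\<^sup>2)"
proof -
  define K where "K = (real CARD('q) * real CARD('p) * C)\<^sup>2"
  define u where "u j t = (\<Sum>n\<in>T. f n $ j * cis_int n t)" for j t
  define a where "a i t = (\<Sum>j\<in>UNIV. G t $ i $ j * u j t)" for i t
  have bu: "bounded_meas (u j)" for j
    unfolding u_def[abs_def] by (intro bounded_meas_intros)
  have ba: "bounded_meas (a i)" for i
    unfolding a_def[abs_def] by (intro bounded_meas_intros Linf_entry_bounded_meas G bu)
  have "(\<Sum>m\<in>F. (norm (\<Sum>n\<in>T. fourier_coeff G (m - n) *v f n))\<^sup>2)
      = (\<Sum>i\<in>UNIV. \<Sum>m\<in>F. (cmod (fcoeff (a i) m))\<^sup>2)"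
    unfolding norm_vec_sq a_def u_def fcoeff_mult_trig_poly[OF G T] by (rule sum.swap)
  also have "\<dots> \<le> (\<Sum>i\<in>UNIV. integral\<^sup>L circle_measure (\<lambda>t. (cmod (a i t))\<^sup>2) / (2 * pi))"
    by (intro sum_mono bessel_inequality ba F)
  also have "\<dots> = integral\<^sup>L circle_measure (\<lambda>t. \<Sum>i\<in>UNIV. (cmod (a i t))\<^sup>2) / (2 * pi)"
    by (subst Bochner_Integration.integral_sum) (auto intro: integrable_norm_sq ba simp: sum_divide_distrib)
  also have "integral\<^sup>L circle_measure (\<lambda>t. \<Sum>i\<in>UNIV. (cmod (a i t))\<^sup>2)
      \<le> integral\<^sup>L circle_measure (\<lambda>t. K * (\<Sum>j\<in>UNIV. (cmod (u j t))\<^sup>2))"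
  proof (rule integral_mono_AE)
    show "integrable circle_measure (\<lambda>t. \<Sum>i\<in>UNIV. (cmod (a i t))\<^sup>2)"
      by (intro Bochner_Integration.integrable_sum integrable_norm_sq ba)
    show "integrable circle_measure (\<lambda>t. K * (\<Sum>j\<in>UNIV. (cmod (u j t))\<^sup>2))"
      by (intro integrable_mult_right Bochner_Integration.integrable_sum integrable_norm_sq bu)
    show "AE t in circle_measure. (\<Sum>i\<in>UNIV. (cmod (a i t))\<^sup>2) \<le> K * (\<Sum>j\<in>UNIV. (cmod (u j t))\<^sup>2)"
      using C
    proof eventually_elim
      fix t assume "norm (G t) \<le> C"
      from norm_matrix_vector_mult_sq_le[OF this, of "\<chi> j. u j t"]
      show "(\<Sum>i\<in>UNIV. (cmod (a i t))\<^sup>2) \<le> K * (\<Sum>j\<in>UNIV. (cmod (u j t))\<^sup>2)"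
        by (simp add: K_def norm_vec_sq a_def matrix_vector_mult_component)
    qed
  qed
  also have "integral\<^sup>L circle_measure (\<lambda>t. K * (\<Sum>j\<in>UNIV. (cmod (u j t))\<^sup>2))
      = K * (\<Sum>j\<in>UNIV. 2 * pi * (\<Sum>n\<in>T. (cmod (f n $ j))\<^sup>2))"
    unfolding integral_mult_right_zero
    by (subst Bochner_Integration.integral_sum, rule integrable_norm_sq[OF bu])
      (simp add: u_def integral_norm_sq_trig_poly[OF T])
  also have "\<dots> = 2 * pi * (K * (\<Sum>n\<in>T. (norm (f n))\<^sup>2))"
    unfolding norm_vec_sq sum_distrib_left[symmetric] by (subst sum.swap) (simp add: algebra_simps)
  finally show ?thesis unfolding K_def by (simp add: divide_right_mono)
qed

lemma mult_op_L2:
  fixes G :: "real \<Rightarrow> complex^'p^'q"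
  assumes G: "Linf G" and f: "f \<in> H2"
  shows "mult_op G f \<in> L2"
proof -
  obtain C where C: "AE t in circle_measure. norm (G t) \<le> C" using Linf_AE_bound[OF G] by blast
  define K where "K = real CARD('q) * real CARD('p)"
  have fL: "f \<in> L2" using f by (simp add: H2_def)
  have sf: "(\<lambda>k. (norm (f k))\<^sup>2) summable_on UNIV" using fL by (simp add: L2_def)
  define B where "B = (K * C)\<^sup>2 * infsum (\<lambda>k. (norm (f k))\<^sup>2) UNIV"
  have fz: "f n = 0" if "n < 0" for n using f that by (simp add: H2_def)
  have finB: "(\<Sum>m\<in>F. (norm (mult_op G f m))\<^sup>2) \<le> B" if F: "finite F" for F
  proof (rule LIMSEQ_le_const2)
    show "(\<lambda>N. \<Sum>m\<in>F. (norm (\<Sum>n\<in>int ` {..<N}. fourier_coeff G (m - n) *v f n))\<^sup>2)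
        \<longlonglongrightarrow> (\<Sum>m\<in>F. (norm (mult_op G f m))\<^sup>2)"
      unfolding mult_op_def
      by (intro tendsto_intros partial_sums_nonneg_tendsto convolution_summable[OF G fL]) (simp add: fz)
    show "\<exists>N. \<forall>n\<ge>N. (\<Sum>m\<in>F. (norm (\<Sum>n\<in>int ` {..<n}. fourier_coeff G (m - n) *v f n))\<^sup>2) \<le> B"
    proof (intro exI allI impI)
      fix N :: nat
      have "(\<Sum>m\<in>F. (norm (\<Sum>n\<in>int ` {..<N}. fourier_coeff G (m - n) *v f n))\<^sup>2)
          \<le> (K * C)\<^sup>2 * (\<Sum>n\<in>int ` {..<N}. (norm (f n))\<^sup>2)"
        unfolding K_def by (rule truncated_convolution_bound[OF G C _ F]) simp
      also have "\<dots> \<le> B" unfolding B_def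
        by (intro mult_left_mono finite_sum_le_infsum[OF sf]) auto
      finally show "(\<Sum>m\<in>F. (norm (\<Sum>n\<in>int ` {..<N}. fourier_coeff G (m - n) *v f n))\<^sup>2) \<le> B" .
    qed
  qed
  have "(\<lambda>m. (norm (mult_op G f m))\<^sup>2) summable_on UNIV"
  proof (rule nonneg_bdd_above_summable_on)
    show "bdd_above (sum (\<lambda>m. (norm (mult_op G f m))\<^sup>2) ` {F. F \<subseteq> UNIV \<and> finite F})"
      by (rule bdd_aboveI[of _ B]) (auto intro: finB)
  qed simp
  then show ?thesis by (simp add: L2_def)
qed

lemma hankel_L2:
  fixes G :: "real \<Rightarrow> complex^'p^'q"
  assumes G: "Linf G" and f: "f \<in> H2"
  shows "hankel G f \<in> L2"
proof -
  have s: "(\<lambda>m. (norm (mult_op G f m))\<^sup>2) summable_on UNIV"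
    using mult_op_L2[OF G f] by (simp add: L2_def)
  have "(\<lambda>m. (norm (hankel G f m))\<^sup>2) summable_on UNIV"
    by (rule summable_on_comparison_test[OF s]) (auto simp: hankel_def Pminus_def)
  then show ?thesis by (simp add: L2_def)
qed

lemma hankel_vanishes_nonneg: "k \<ge> 0 \<Longrightarrow> hankel G f k = 0"
  by (simp add: hankel_def Pminus_def)

lemma mult_op_shiftS: "mult_op G (shiftS f) = multV (mult_op G f)"
proof
  fix m
  have "mult_op G (shiftS f) m = infsum (\<lambda>j. fourier_coeff G (m - (j + 1)) *v f j) UNIV"
    unfolding mult_op_def shiftS_def by (subst infsum_int_shift) simp
  also have "\<dots> = multV (mult_op G f) m"
    unfolding multV_def mult_op_def by (simp add: algebra_simps)
  finally show "mult_op G (shiftS f) m = multV (mult_op G f) m" .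
qed

lemma hankel_shiftS: "hankel G (shiftS f) = Vminus (hankel G f)"
  unfolding hankel_def Vminus_def mult_op_shiftS
  by (auto simp: Pminus_def multV_def fun_eq_iff)

lemma hankel_Vminus_eigenvalue_le_1:
  assumes G: "Linf G" and x: "x \<in> hankel G ` H2" "x \<noteq> 0" and eig: "Vminus x = cscale c x"
  shows "cmod c \<le> 1"
proof -
  obtain f where f: "f \<in> H2" "x = hankel G f" using x by blast
  show ?thesis
    using Vminus_eigenvalue_norm_le_1[OF _ _ x(2) eig] hankel_L2[OF G f(1)] hankel_vanishes_nonneg f(2)
    by blast
qed

lemma hankel_image_diff:
  fixes G :: "real \<Rightarrow> complex^'p^'q"
  assumes G: "Linf G" and N: "N \<subseteq> H2" "\<And>f g. f \<in> N \<Longrightarrow> g \<in> N \<Longrightarrow> f - g \<in> N"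
    and x: "x \<in> hankel G ` N" and y: "y \<in> hankel G ` N"
  shows "x - y \<in> hankel G ` N"
proof -
  obtain f g where fg: "f \<in> N" "g \<in> N" "x = hankel G f" "y = hankel G g"
    using x y by blast
  then have "x - y = hankel G (f - g)"
    using N(1) hankel_diff[OF G] by (auto simp: H2_L2 subset_iff)
  then show ?thesis using N(2)[OF fg(1,2)] by blast
qed

lemma Vminus_hankel_orth_compl_in:
  assumes "shiftS_adj ` M \<subseteq> M" and "x \<in> hankel G ` orth_compl_in H2 M"
  shows "Vminus x \<in> hankel G ` orth_compl_in H2 M"
proof -
  obtain f where "f \<in> orth_compl_in H2 M" "x = hankel G f" using assms(2) by blast
  then show ?thesis using shiftS_orth_compl_in_H2[OF assms(1)] hankel_shiftS by (metis image_eqI)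
qed

lemma orth_proj_hankel_orth_compl_in:
  fixes G :: "real \<Rightarrow> complex^'p^'q"
  assumes G: "Linf G" and M: "M \<subseteq> L2" and x: "x \<in> hankel G ` orth_compl_in H2 M"
  shows "orth_proj (hankel G ` orth_compl_in H2 M) x = x"
proof (rule orth_proj_eqI)
  show "hankel G ` orth_compl_in H2 M \<subseteq> L2"
    using hankel_L2[OF G] by (auto simp: orth_compl_in_def)
  then show "x \<in> L2" using x by blast
  show "a - b \<in> hankel G ` orth_compl_in H2 M"
    if "a \<in> hankel G ` orth_compl_in H2 M" "b \<in> hankel G ` orth_compl_in H2 M" for a b
    using hankel_image_diff[OF G _ orth_compl_in_H2_diff[OF M] that]
    by (auto simp: orth_compl_in_def)
qed (use x in auto)

section \<open>Restrictions of operators\<close>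

lemma spec_radius_restrict_le:
  assumes X0: "X0 \<subseteq> X" and T0: "\<And>x. x \<in> X0 \<Longrightarrow> T0 x = T x"
    and bdd: "bdd_above {cmod c | c. \<exists>x\<in>X. x \<noteq> 0 \<and> T x = cscale c x}"
  shows "spec_radius T0 X0 \<le> spec_radius T X"
  unfolding spec_radius_def
proof (rule cSup_subset_mono)
  show "insert 0 {cmod c | c. \<exists>x\<in>X0. x \<noteq> 0 \<and> T0 x = cscale c x}
      \<subseteq> insert 0 {cmod c | c. \<exists>x\<in>X. x \<noteq> 0 \<and> T x = cscale c x}"
    using X0 T0 by fastforce
qed (use bdd in auto)

lemma funpow_restrict_eq:
  assumes "\<And>x. x \<in> A \<Longrightarrow> T x \<in> A" "\<And>x. x \<in> A \<Longrightarrow> T0 x = T x" "x \<in> A"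
  shows "(T ^^ k) x = (T0 ^^ k) x"
  using assms(3) by (induction k arbitrary: x) (simp_all add: funpow_Suc_right assms(1,2) del: funpow.simps)

theorem lemma6p1:
  fixes G :: "real \<Rightarrow> complex^'p^'q"
    and M0 :: "(int \<Rightarrow> complex^'p) set"
  assumes G: "Linf G"
    and C1: "finite_rank G"
    and C2a: "\<forall>h. maximizing_vector G h \<longrightarrow> h \<notin> shiftS ` H2"
    and C2b: "cdim {h. maximizing_vector G h} = CARD('p)"
    and M0_sub: "csubspace M0" "M0 \<subseteq> H2"
    and M0_fin: "\<exists>B. finite B \<and> M0 = cspan B"
    and M0_inv: "shiftS_adj ` M0 \<subseteq> M0"
  defines "X \<equiv> hankel G ` H2"
    and "W \<equiv> hankel G"
    and "P0 \<equiv> orth_proj M0"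
    and "X0 \<equiv> hankel G ` orth_compl_in H2 M0"
  defines "Z \<equiv> (\<lambda>x. if x \<in> X then Vminus x else undefined)"
    and "Pi0 \<equiv> (\<lambda>x. if x \<in> X then orth_proj X0 x else undefined)"
  defines "Z0 \<equiv> (\<lambda>x. if x \<in> X0 then Z x else undefined)"
    and "W0 \<equiv> (\<lambda>f. Pi0 (W f))"
  shows "Z ` X0 \<subseteq> X0 \<and>
         spec_radius Z0 X0 \<le> spec_radius Z X \<and>
         (\<forall>k::nat. \<forall>f\<in>H2. (Z ^^ k) (W (f - P0 f)) = (Z0 ^^ k) (W0 (f - P0 f)))"
proof -
  have X0X: "X0 \<subseteq> X" by (auto simp: X0_def X_def orth_compl_in_def)
  have Z_X0: "Z x \<in> X0" if "x \<in> X0" for x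
    using that X0X Vminus_hankel_orth_compl_in[OF M0_inv, of x G] by (auto simp: Z_def X0_def)
  have Z0_X0: "Z0 x = Z x" if "x \<in> X0" for x using that by (simp add: Z0_def)
  have eigenvalues_bdd: "bdd_above {cmod c | c. \<exists>x\<in>X. x \<noteq> 0 \<and> Z x = cscale c x}"
    by (rule bdd_aboveI[of _ 1]) (auto simp: Z_def X_def intro: hankel_Vminus_eigenvalue_le_1[OF G])
  have "spec_radius Z0 X0 \<le> spec_radius Z X"
    by (rule spec_radius_restrict_le[OF X0X _ eigenvalues_bdd]) (rule Z0_X0)
  moreover have "(Z ^^ k) (W (f - P0 f)) = (Z0 ^^ k) (W0 (f - P0 f))" if f: "f \<in> H2" for k f
  proof -
    obtain B where B: "finite B" "M0 = cspan B" using M0_fin by blast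
    have x: "W (f - P0 f) \<in> X0"
      using residual_orth_proj_span_in_orth_compl[OF B(1) _ f] M0_sub(2) B(2)
      by (simp add: W_def X0_def P0_def)
    moreover have "W0 (f - P0 f) = W (f - P0 f)"
      using x X0X orth_proj_hankel_orth_compl_in[OF G _ x[unfolded X0_def W_def]] M0_sub(2)
      by (auto simp: W0_def Pi0_def X0_def W_def H2_def)
    ultimately show ?thesis using funpow_restrict_eq[OF Z_X0 Z0_X0] by simp
  qed
  ultimately show ?thesis using Z_X0 by blast
qed

end
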